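(* Let $\mathbf C$ be a category of coframes. The forgetful functor $|\_|:\mathbf C^{\mathrm{adh}}\to\mathbf C$ is topological: every sink $(\varphi_i:|L_i|\to L)_{i\in I}$ of $\mathbf C$-morphisms, with each $L_i$ an adherence $\mathbf C$-object, has a unique final lift, namely $(L,\nu_L)$ where $$\nu_L(\ell)=\bigwedge_{\substack{n\in\mathbb N,\ a_1,\dots,a_n\in\mathcal C_L\\ \ell\le\bigvee_{j=1}^n a_j}}\ \bigvee_{j=1}^n\ \bigwedge_{i\in I}\varphi_i\big(\nu_{L_i}(\varphi_{i!}(a_j))\big).$$
   Context: A category of coframes has coframes as objects and coframe morphisms (preserving arbitrary infima and finite suprema); each coframe morphism $\varphi$ has a left adjoint $\varphi_!$. $\mathcal C_L$ is the set of complemented elements of $L$. An adherence structure on $L$ is a monotone $\nu:L\to L$ preserving finite suprema of complemented elements with $\nu(\ell)=\bigwedge\{\nu(a):a\in\mathcal C_L,a\ge\ell\}$. An adherence $\mathbf C$-object is $(L,\nu_L)$ with $\nu_L$ an adherence structure; $\mathbf C^{\mathrm{adh}}$ has as morphisms the $\mathbf C$-morphisms $\varphi:L\to L'$ that are continuous: $\nu_{L'}(\ell')\le\varphi(\nu_L(\varphi_!(\ell')))$ for all $\ell'\in L'$. $|\_|$ sends $(L,\nu_L)$ to $L$. A lift of the sink is an adherence structure on $L$ making every $\varphi_i$ continuous; it is final if for every $\mathbf C$-morphism $\psi:L\to|L'|$ with $L'$ an adherence $\mathbf C$-object, $\psi$ is continuous iff every $\psi\circ\varphi_i$ is continuous.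 *)

theory Defs
  imports Main
begin

text \<open>A (potential) coframe is represented explicitly by a carrier set and an order
  relation on it, so that coframes with different carriers can live in one ambient type.\<close>

record 'a lat = elems :: "'a set" leq :: "'a \<Rightarrow> 'a \<Rightarrow> bool"

definition is_glb :: "'a lat \<Rightarrow> 'a set \<Rightarrow> 'a \<Rightarrow> bool" where
  "is_glb L S x \<longleftrightarrow> x \<in> elems L \<and> (\<forall>s\<in>S. leq L x s)
     \<and> (\<forall>y\<in>elems L. (\<forall>s\<in>S. leq L y s) \<longrightarrow> leq L y x)"

definition is_lub :: "'a lat \<Rightarrow> 'a set \<Rightarrow> 'a \<Rightarrow> bool" where
  "is_lub L S x \<longleftrightarrow> x \<in> elems L \<and> (\<forall>s\<in>S. leq L s x)
     \<and> (\<forall>y\<in>elems L. (\<forall>s\<in>S. leq L s y) \<longrightarrow> leq L x y)"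

definition Meet :: "'a lat \<Rightarrow> 'a set \<Rightarrow> 'a" where
  "Meet L S = (THE x. is_glb L S x)"

definition Join :: "'a lat \<Rightarrow> 'a set \<Rightarrow> 'a" where
  "Join L S = (THE x. is_lub L S x)"

definition coframe :: "'a lat \<Rightarrow> bool" where
  "coframe L \<longleftrightarrow>
     (\<forall>x\<in>elems L. leq L x x)
   \<and> (\<forall>x\<in>elems L. \<forall>y\<in>elems L. leq L x y \<and> leq L y x \<longrightarrow> x = y)
   \<and> (\<forall>x\<in>elems L. \<forall>y\<in>elems L. \<forall>z\<in>elems L. leq L x y \<and> leq L y z \<longrightarrow> leq L x z)
   \<and> (\<forall>S. S \<subseteq> elems L \<longrightarrow> (\<exists>x. is_glb L S x) \<and> (\<exists>x. is_lub L S x))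
   \<and> (\<forall>a\<in>elems L. \<forall>S. S \<subseteq> elems L \<longrightarrow>
        Join L {a, Meet L S} = Meet L ((\<lambda>s. Join L {a, s}) ` S))"

definition coframe_hom :: "'a lat \<Rightarrow> 'a lat \<Rightarrow> ('a \<Rightarrow> 'a) \<Rightarrow> bool" where
  "coframe_hom L L' f \<longleftrightarrow> coframe L \<and> coframe L' \<and> f ` elems L \<subseteq> elems L'
   \<and> (\<forall>S. S \<subseteq> elems L \<longrightarrow> f (Meet L S) = Meet L' (f ` S))
   \<and> (\<forall>S. S \<subseteq> elems L \<longrightarrow> finite S \<longrightarrow> f (Join L S) = Join L' (f ` S))"

definition ladj :: "'a lat \<Rightarrow> 'a lat \<Rightarrow> ('a \<Rightarrow> 'a) \<Rightarrow> 'a \<Rightarrow> 'a" where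
  "ladj L L' f l' = Meet L {l \<in> elems L. leq L' l' (f l)}"

definition compl_elems :: "'a lat \<Rightarrow> 'a set" where
  "compl_elems L = {a \<in> elems L. \<exists>b\<in>elems L.
      Meet L {a, b} = Join L {} \<and> Join L {a, b} = Meet L {}}"

definition adherence :: "'a lat \<Rightarrow> ('a \<Rightarrow> 'a) \<Rightarrow> bool" where
  "adherence L \<nu> \<longleftrightarrow> \<nu> ` elems L \<subseteq> elems L
   \<and> (\<forall>x\<in>elems L. \<forall>y\<in>elems L. leq L x y \<longrightarrow> leq L (\<nu> x) (\<nu> y))
   \<and> (\<forall>S. S \<subseteq> compl_elems L \<longrightarrow> finite S \<longrightarrow> \<nu> (Join L S) = Join L (\<nu> ` S))
   \<and> (\<forall>l\<in>elems L. \<nu> l = Meet L (\<nu> ` {a \<in> compl_elems L. leq L l a}))"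

definition continuous_adh :: "'a lat \<Rightarrow> ('a \<Rightarrow> 'a) \<Rightarrow> 'a lat \<Rightarrow> ('a \<Rightarrow> 'a) \<Rightarrow> ('a \<Rightarrow> 'a) \<Rightarrow> bool" where
  "continuous_adh L \<nu> L' \<nu>' f \<longleftrightarrow>
     (\<forall>l'\<in>elems L'. leq L' (\<nu>' l') (f (\<nu> (ladj L L' f l'))))"

definition coframe_category :: "'a lat set \<Rightarrow> ('a lat \<Rightarrow> 'a lat \<Rightarrow> ('a \<Rightarrow> 'a) \<Rightarrow> bool) \<Rightarrow> bool" where
  "coframe_category Ob Hom \<longleftrightarrow>
     (\<forall>L\<in>Ob. coframe L)
   \<and> (\<forall>L L' f. Hom L L' f \<longrightarrow> L \<in> Ob \<and> L' \<in> Ob \<and> coframe_hom L L' f)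
   \<and> (\<forall>L\<in>Ob. Hom L L id)
   \<and> (\<forall>L M N f g. Hom L M f \<longrightarrow> Hom M N g \<longrightarrow> Hom L N (g \<circ> f))"

definition is_lift :: "'i set \<Rightarrow> ('i \<Rightarrow> 'a lat) \<Rightarrow> ('i \<Rightarrow> 'a \<Rightarrow> 'a) \<Rightarrow> ('i \<Rightarrow> 'a \<Rightarrow> 'a)
                       \<Rightarrow> 'a lat \<Rightarrow> ('a \<Rightarrow> 'a) \<Rightarrow> bool" where
  "is_lift I Ls \<nu>s \<phi> L \<nu> \<longleftrightarrow> adherence L \<nu> \<and>
     (\<forall>i\<in>I. continuous_adh (Ls i) (\<nu>s i) L \<nu> (\<phi> i))"

definition is_final_lift :: "'a lat set \<Rightarrow> ('a lat \<Rightarrow> 'a lat \<Rightarrow> ('a \<Rightarrow> 'a) \<Rightarrow> bool)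
     \<Rightarrow> 'i set \<Rightarrow> ('i \<Rightarrow> 'a lat) \<Rightarrow> ('i \<Rightarrow> 'a \<Rightarrow> 'a) \<Rightarrow> ('i \<Rightarrow> 'a \<Rightarrow> 'a)
     \<Rightarrow> 'a lat \<Rightarrow> ('a \<Rightarrow> 'a) \<Rightarrow> bool" where
  "is_final_lift Ob Hom I Ls \<nu>s \<phi> L \<nu> \<longleftrightarrow> is_lift I Ls \<nu>s \<phi> L \<nu> \<and>
     (\<forall>L'\<in>Ob. \<forall>\<nu>'. adherence L' \<nu>' \<longrightarrow> (\<forall>\<psi>. Hom L L' \<psi> \<longrightarrow>
        (continuous_adh L \<nu> L' \<nu>' \<psi> \<longleftrightarrow>
         (\<forall>i\<in>I. continuous_adh (Ls i) (\<nu>s i) L' \<nu>' (\<psi> \<circ> \<phi> i)))))"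

text \<open>The candidate adherence structure of the theorem; the finite families
  \<open>a\<^sub>1,\<dots>,a\<^sub>n\<close> of complemented elements are represented by finite sets.\<close>
definition sink_adh :: "'i set \<Rightarrow> ('i \<Rightarrow> 'a lat) \<Rightarrow> ('i \<Rightarrow> 'a \<Rightarrow> 'a) \<Rightarrow> ('i \<Rightarrow> 'a \<Rightarrow> 'a)
                       \<Rightarrow> 'a lat \<Rightarrow> 'a \<Rightarrow> 'a" where
  "sink_adh I Ls \<nu>s \<phi> L l = Meet L
     { Join L ((\<lambda>a. Meet L ((\<lambda>i. \<phi> i (\<nu>s i (ladj (Ls i) L (\<phi> i) a))) ` I)) ` S)
       | S. finite S \<and> S \<subseteq> compl_elems L \<and> leq L l (Join L S) }"

end

theory Submission
  imports Defs
begin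

(* Write \<mu>(a) = \<Sqinter>\<^sub>i \<phi>\<^sub>i(\<nu>\<^sub>i(\<phi>\<^sub>i\<^sub>! a)) for complemented a.  The candidate \<nu>\<^sub>L is the largest
   adherence structure lying below \<mu> on complemented elements: it preserves finite joins of
   complemented elements because binary joins distribute over arbitrary meets in a coframe and
   complemented elements are closed under finite joins.
   Since \<phi>\<^sub>! is left adjoint to \<phi>, a morphism \<psi> : (L, \<nu>) \<rightarrow> (L', \<nu>') is continuous iff
   \<nu>'(\<psi> a) \<le> \<psi>(\<nu> a) for all complemented a.  For \<nu> = \<nu>\<^sub>L this says \<nu>'(\<psi> a) \<le> \<psi>(\<mu> a), and as \<psi>
   preserves meets it splits into the inequalities \<nu>'(\<psi> a) \<le> \<psi>(\<phi>\<^sub>i(\<nu>\<^sub>i(\<phi>\<^sub>i\<^sub>! a))), which together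
   say that every \<psi> \<circ> \<phi>\<^sub>i is continuous.  Taking \<psi> = id shows that \<nu>\<^sub>L is a lift, and two final
   lifts agree because the identity is continuous between them in both directions. *)

lemma adherence_in: "adherence L \<nu> \<Longrightarrow> x \<in> elems L \<Longrightarrow> \<nu> x \<in> elems L"
  unfolding adherence_def by (elim conjE) (simp add: image_subset_iff)

lemma adherence_mono:
  "adherence L \<nu> \<Longrightarrow> x \<in> elems L \<Longrightarrow> y \<in> elems L \<Longrightarrow> leq L x y \<Longrightarrow> leq L (\<nu> x) (\<nu> y)"
  unfolding adherence_def by (elim conjE) simp

lemma adherence_Join:
  "adherence L \<nu> \<Longrightarrow> S \<subseteq> compl_elems L \<Longrightarrow> finite S \<Longrightarrow> \<nu> (Join L S) = Join L (\<nu> ` S)"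
  unfolding adherence_def by (elim conjE) simp

lemma adherence_eq_Meet:
  "adherence L \<nu> \<Longrightarrow> l \<in> elems L \<Longrightarrow> \<nu> l = Meet L (\<nu> ` {a \<in> compl_elems L. leq L l a})"
  unfolding adherence_def by (elim conjE) simp

definition complement :: "'a lat \<Rightarrow> 'a \<Rightarrow> 'a \<Rightarrow> bool" where
  "complement L a b \<longleftrightarrow> a \<in> elems L \<and> b \<in> elems L
     \<and> Meet L {a, b} = Join L {} \<and> Join L {a, b} = Meet L {}"

lemma compl_elems_iff: "a \<in> compl_elems L \<longleftrightarrow> (\<exists>b. complement L a b)"
  unfolding compl_elems_def complement_def by blast

locale coframe_lat =
  fixes L :: "'a lat"
  assumes coframe: "coframe L"
begin

abbreviation leq_L (infix "\<sqsubseteq>" 50) where "x \<sqsubseteq> y \<equiv> leq L x y"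
abbreviation E where "E \<equiv> elems L"

lemma leq_refl: "x \<in> E \<Longrightarrow> x \<sqsubseteq> x"
  using coframe unfolding coframe_def by (elim conjE) metis

lemma leq_antisym: "x \<in> E \<Longrightarrow> y \<in> E \<Longrightarrow> x \<sqsubseteq> y \<Longrightarrow> y \<sqsubseteq> x \<Longrightarrow> x = y"
  using coframe unfolding coframe_def by (elim conjE) metis

lemma leq_trans: "x \<in> E \<Longrightarrow> y \<in> E \<Longrightarrow> z \<in> E \<Longrightarrow> x \<sqsubseteq> y \<Longrightarrow> y \<sqsubseteq> z \<Longrightarrow> x \<sqsubseteq> z"
  using coframe unfolding coframe_def by (elim conjE) metis

lemma join_Meet_distrib:
  "a \<in> E \<Longrightarrow> S \<subseteq> E \<Longrightarrow> Join L {a, Meet L S} = Meet L ((\<lambda>s. Join L {a, s}) ` S)"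
  using coframe unfolding coframe_def by (elim conjE) metis

lemma is_glb_Meet:
  assumes "S \<subseteq> E"
  shows "is_glb L S (Meet L S)"
proof -
  obtain x where x: "is_glb L S x"
    using coframe assms unfolding coframe_def by (elim conjE) metis
  moreover have "is_glb L S y \<Longrightarrow> y = x" for y
    using x unfolding is_glb_def by (metis leq_antisym)
  ultimately show ?thesis
    unfolding Meet_def by (rule theI)
qed

lemma is_lub_Join:
  assumes "S \<subseteq> E"
  shows "is_lub L S (Join L S)"
proof -
  obtain x where x: "is_lub L S x"
    using coframe assms unfolding coframe_def by (elim conjE) metis
  moreover have "is_lub L S y \<Longrightarrow> y = x" for y
    using x unfolding is_lub_def by (metis leq_antisym)
  ultimately show ?thesis
    unfolding Join_def by (rule theI)
qed

lemma Meet_in [simp]: "S \<subseteq> E \<Longrightarrow> Meet L S \<in> E"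
  using is_glb_Meet unfolding is_glb_def by blast

lemma Join_in [simp]: "S \<subseteq> E \<Longrightarrow> Join L S \<in> E"
  using is_lub_Join unfolding is_lub_def by blast

lemma le_Meet_iff: "S \<subseteq> E \<Longrightarrow> y \<in> E \<Longrightarrow> y \<sqsubseteq> Meet L S \<longleftrightarrow> (\<forall>s\<in>S. y \<sqsubseteq> s)"
  using is_glb_Meet[of S] unfolding is_glb_def by (metis leq_trans subsetD)

lemma Join_le_iff: "S \<subseteq> E \<Longrightarrow> y \<in> E \<Longrightarrow> Join L S \<sqsubseteq> y \<longleftrightarrow> (\<forall>s\<in>S. s \<sqsubseteq> y)"
  using is_lub_Join[of S] unfolding is_lub_def by (metis leq_trans subsetD)

lemma Meet_lower: "S \<subseteq> E \<Longrightarrow> s \<in> S \<Longrightarrow> Meet L S \<sqsubseteq> s"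
  by (metis Meet_in le_Meet_iff leq_refl)

lemma Join_upper: "S \<subseteq> E \<Longrightarrow> s \<in> S \<Longrightarrow> s \<sqsubseteq> Join L S"
  by (metis Join_in Join_le_iff leq_refl)

lemma Meet_leI: "S \<subseteq> E \<Longrightarrow> y \<in> E \<Longrightarrow> s \<in> S \<Longrightarrow> s \<sqsubseteq> y \<Longrightarrow> Meet L S \<sqsubseteq> y"
  by (meson Meet_in Meet_lower leq_trans subsetD)

lemma le_JoinI: "S \<subseteq> E \<Longrightarrow> y \<in> E \<Longrightarrow> s \<in> S \<Longrightarrow> y \<sqsubseteq> s \<Longrightarrow> y \<sqsubseteq> Join L S"
  by (meson Join_in Join_upper leq_trans subsetD)

lemma Join_singleton: "x \<in> E \<Longrightarrow> Join L {x} = x"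
  by (intro leq_antisym) (simp_all add: Join_le_iff Join_upper leq_refl)

lemma Join_absorb: "x \<in> E \<Longrightarrow> y \<in> E \<Longrightarrow> y \<sqsubseteq> x \<Longrightarrow> Join L {x, y} = x"
  by (intro leq_antisym) (simp_all add: Join_le_iff Join_upper leq_refl)

lemma Meet_absorb: "x \<in> E \<Longrightarrow> y \<in> E \<Longrightarrow> x \<sqsubseteq> y \<Longrightarrow> Meet L {x, y} = x"
  by (intro leq_antisym) (simp_all add: le_Meet_iff Meet_lower leq_refl)

lemma Join_mono: "S \<subseteq> T \<Longrightarrow> T \<subseteq> E \<Longrightarrow> Join L S \<sqsubseteq> Join L T"
  by (simp add: Join_le_iff Join_upper subset_iff)

lemma Join_image_mono:
  assumes "f ` S \<subseteq> E" "g ` S \<subseteq> E" "\<And>s. s \<in> S \<Longrightarrow> f s \<sqsubseteq> g s"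
  shows "Join L (f ` S) \<sqsubseteq> Join L (g ` S)"
  using assms by (simp add: Join_le_iff) (meson image_eqI image_subset_iff le_JoinI)

lemma Join2_mono:
  assumes "x \<in> E" "y \<in> E" "x' \<in> E" "y' \<in> E" "x \<sqsubseteq> x'" "y \<sqsubseteq> y'"
  shows "Join L {x, y} \<sqsubseteq> Join L {x', y'}"
  using assms le_JoinI[of "{x', y'}" x x'] le_JoinI[of "{x', y'}" y y'] by (simp add: Join_le_iff)

lemma Meet2_mono:
  assumes "x \<in> E" "y \<in> E" "x' \<in> E" "y' \<in> E" "x \<sqsubseteq> x'" "y \<sqsubseteq> y'"
  shows "Meet L {x, y} \<sqsubseteq> Meet L {x', y'}"
  using assms Meet_leI[of "{x, y}" x' x] Meet_leI[of "{x, y}" y' y] by (simp add: le_Meet_iff)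

lemma Join_Un:
  assumes A: "A \<subseteq> E" and B: "B \<subseteq> E"
  shows "Join L (A \<union> B) = Join L {Join L A, Join L B}"
proof (rule leq_antisym)
  have AB: "{Join L A, Join L B} \<subseteq> E"
    using A B by simp
  have "s \<sqsubseteq> Join L {Join L A, Join L B}" if "s \<in> A \<union> B" for s
  proof (cases "s \<in> A")
    case True
    then show ?thesis
      using leq_trans[OF _ _ _ Join_upper[OF A True] Join_upper[OF AB]] A AB by auto
  next
    case False
    then have "s \<in> B"
      using that by simp
    then show ?thesis
      using leq_trans[OF _ _ _ Join_upper[OF B] Join_upper[OF AB]] B AB by auto
  qed
  then show "Join L (A \<union> B) \<sqsubseteq> Join L {Join L A, Join L B}"
    using A B by (simp add: Join_le_iff)
  show "Join L {Join L A, Join L B} \<sqsubseteq> Join L (A \<union> B)"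
    using A B by (simp add: Join_le_iff Join_upper)
qed (use A B in simp_all)

lemma Join_insert: "x \<in> E \<Longrightarrow> F \<subseteq> E \<Longrightarrow> Join L (insert x F) = Join L {x, Join L F}"
  using Join_Un[of "{x}" F] by (simp add: Join_singleton)

lemma le_Join_Meet_Meet:
  assumes A: "A \<subseteq> E" and B: "B \<subseteq> E" and y: "y \<in> E"
    and le: "\<And>s t. s \<in> B \<Longrightarrow> t \<in> A \<Longrightarrow> y \<sqsubseteq> Join L {s, t}"
  shows "y \<sqsubseteq> Join L {Meet L A, Meet L B}"
proof -
  have "y \<sqsubseteq> Meet L ((\<lambda>t. Join L {s, t}) ` A)" if "s \<in> B" for s
    using that A B y le by (subst le_Meet_iff) (auto intro!: Join_in)
  then have "y \<sqsubseteq> Meet L ((\<lambda>s. Meet L ((\<lambda>t. Join L {s, t}) ` A)) ` B)"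
    using A B y by (subst le_Meet_iff) (auto intro!: Meet_in Join_in)
  also have "Meet L ((\<lambda>s. Meet L ((\<lambda>t. Join L {s, t}) ` A)) ` B)
      = Meet L ((\<lambda>s. Join L {Meet L A, s}) ` B)"
    using A B by (intro arg_cong[where f = "Meet L"] image_cong refl)
      (auto simp: insert_commute join_Meet_distrib)
  also have "\<dots> = Join L {Meet L A, Meet L B}"
    using A B by (simp add: join_Meet_distrib)
  finally show ?thesis .
qed

lemma coframe_hom_id: "coframe_hom L L id"
  unfolding coframe_hom_def using coframe by simp

lemma compl_elems_subset: "compl_elems L \<subseteq> E"
  unfolding compl_elems_def by blast

lemma complement_bot_top: "complement L (Join L {}) (Meet L {})"
proof -
  have bot_top: "Join L {} \<sqsubseteq> Meet L {}"
    by (simp add: Join_le_iff)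
  then have "Meet L {Join L {}, Meet L {}} = Join L {}"
    by (simp add: Meet_absorb)
  moreover have "Join L {Join L {}, Meet L {}} = Meet L {}"
    using Join_absorb[OF _ _ bot_top] by (simp add: insert_commute)
  ultimately show ?thesis
    unfolding complement_def by simp
qed

lemma complement_Join2:
  assumes "complement L a a'" "complement L b b'"
  shows "complement L (Join L {a, b}) (Meet L {a', b'})"
proof -
  have a: "a \<in> E" "a' \<in> E" "Meet L {a, a'} = Join L {}" "Join L {a, a'} = Meet L {}"
    and b: "b \<in> E" "b' \<in> E" "Meet L {b, b'} = Join L {}" "Join L {b, b'} = Meet L {}"
    using assms unfolding complement_def by blast+
  define J M where "J = Join L {a, b}" and "M = Meet L {a', b'}"
  have J: "J \<in> E" "a \<sqsubseteq> J" "b \<sqsubseteq> J" and M: "M \<in> E" "M \<sqsubseteq> a'" "M \<sqsubseteq> b'"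
    using a b by (simp_all add: J_def M_def Join_upper Meet_lower)
  have "Join L {J, M} = Meet L {}"
  proof (rule leq_antisym)
    have "Meet L {} \<sqsubseteq> Join L {J, a'}" "Meet L {} \<sqsubseteq> Join L {J, b'}"
      using Join2_mono[of a a' J a'] Join2_mono[of b b' J b'] a b J by (simp_all add: leq_refl)
    then have "Meet L {} \<sqsubseteq> Meet L {Join L {J, a'}, Join L {J, b'}}"
      using a b J by (simp add: le_Meet_iff)
    also have "\<dots> = Join L {J, M}"
      using join_Meet_distrib[of J "{a', b'}"] a b J by (simp add: M_def)
    finally show "Meet L {} \<sqsubseteq> Join L {J, M}" .
  qed (use J M in \<open>simp_all add: le_Meet_iff\<close>)
  moreover have "Meet L {J, M} = Join L {}"
  proof (rule leq_antisym)
    have "J = Join L {b, a}"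
      by (simp add: J_def insert_commute)
    then have "Meet L {J, M} \<sqsubseteq> Meet L {Join L {b, a}, Join L {b, a'}}"
      using a b J M le_JoinI[of "{b, a'}" M a'] by (intro Meet2_mono) (auto intro: leq_refl)
    also have "\<dots> = Join L {b, Meet L {a, a'}}"
      using join_Meet_distrib[of b "{a, a'}"] a b by simp
    also have "\<dots> = b"
      using a b by (simp add: Join_absorb Join_le_iff)
    finally have "Meet L {J, M} \<sqsubseteq> b" .
    moreover have "Meet L {J, M} \<sqsubseteq> b'"
      using J M b by (intro Meet_leI[of _ _ M]) auto
    ultimately show "Meet L {J, M} \<sqsubseteq> Join L {}"
      using J M b by (simp add: le_Meet_iff flip: b(3))
  qed (use J M in \<open>simp_all add: Join_le_iff\<close>)
  ultimately show ?thesis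
    using J M unfolding complement_def J_def M_def by simp
qed

lemma Join_compl: "finite S \<Longrightarrow> S \<subseteq> compl_elems L \<Longrightarrow> Join L S \<in> compl_elems L"
proof (induction S rule: finite_induct)
  case empty
  show ?case
    using complement_bot_top by (auto simp: compl_elems_iff)
next
  case (insert x F)
  then have "Join L (insert x F) = Join L {x, Join L F}"
    using compl_elems_subset by (intro Join_insert) auto
  moreover obtain x' y where "complement L x x'" "complement L (Join L F) y"
    using insert by (auto simp: compl_elems_iff)
  ultimately have "complement L (Join L (insert x F)) (Meet L {x', y})"
    by (simp add: complement_Join2)
  then show ?case
    by (auto simp: compl_elems_iff)
qed

end

text \<open>For \<open>\<mu>\<close> defined on the complemented elements, \<open>generated_adh L \<mu>\<close> is the largest
  adherence structure that lies below \<open>\<mu>\<close> on complemented elements.\<close>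

definition generated_adh :: "'a lat \<Rightarrow> ('a \<Rightarrow> 'a) \<Rightarrow> 'a \<Rightarrow> 'a" where
  "generated_adh L \<mu> l = Meet L
     {Join L (\<mu> ` S) | S. finite S \<and> S \<subseteq> compl_elems L \<and> leq L l (Join L S)}"

context coframe_lat
begin

context
  fixes \<mu> :: "'a \<Rightarrow> 'a"
  assumes \<mu>_in: "\<And>a. a \<in> compl_elems L \<Longrightarrow> \<mu> a \<in> E"
begin

lemma image_\<mu>_subset: "S \<subseteq> compl_elems L \<Longrightarrow> \<mu> ` S \<subseteq> E"
  using \<mu>_in by blast

lemma cover_Joins_subset:
  "{Join L (\<mu> ` S) | S. finite S \<and> S \<subseteq> compl_elems L \<and> l \<sqsubseteq> Join L S} \<subseteq> E"
  using image_\<mu>_subset by auto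

lemma generated_adh_in: "generated_adh L \<mu> l \<in> E"
  unfolding generated_adh_def using cover_Joins_subset by simp

lemma generated_adh_le_cover:
  "finite S \<Longrightarrow> S \<subseteq> compl_elems L \<Longrightarrow> l \<sqsubseteq> Join L S \<Longrightarrow> generated_adh L \<mu> l \<sqsubseteq> Join L (\<mu> ` S)"
  unfolding generated_adh_def by (rule Meet_lower[OF cover_Joins_subset]) blast

lemma generated_adh_le: "a \<in> compl_elems L \<Longrightarrow> generated_adh L \<mu> a \<sqsubseteq> \<mu> a"
  using generated_adh_le_cover[of "{a}" a] compl_elems_subset \<mu>_in
  by (auto simp: Join_singleton leq_refl)

lemma le_generated_adh_iff:
  "y \<in> E \<Longrightarrow> y \<sqsubseteq> generated_adh L \<mu> l \<longleftrightarrow>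
     (\<forall>S. finite S \<and> S \<subseteq> compl_elems L \<and> l \<sqsubseteq> Join L S \<longrightarrow> y \<sqsubseteq> Join L (\<mu> ` S))"
  unfolding generated_adh_def using cover_Joins_subset by (subst le_Meet_iff) blast+

lemma generated_adh_mono:
  assumes "x \<in> E" "y \<in> E" "x \<sqsubseteq> y"
  shows "generated_adh L \<mu> x \<sqsubseteq> generated_adh L \<mu> y"
proof -
  have "x \<sqsubseteq> Join L S" if "S \<subseteq> compl_elems L" "y \<sqsubseteq> Join L S" for S
    using that assms compl_elems_subset by (meson Join_in leq_trans subset_trans)
  then show ?thesis
    using generated_adh_in generated_adh_le_cover by (simp add: le_generated_adh_iff)
qed

lemma generated_adh_Join2_le:
  assumes x: "x \<in> E" and y: "y \<in> E"
  shows "generated_adh L \<mu> (Join L {x, y}) \<sqsubseteq> Join L {generated_adh L \<mu> x, generated_adh L \<mu> y}"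
  unfolding generated_adh_def[of _ _ x] generated_adh_def[of _ _ y]
proof (rule le_Join_Meet_Meet[OF cover_Joins_subset cover_Joins_subset generated_adh_in])
  fix s t
  assume "s \<in> {Join L (\<mu> ` S) | S. finite S \<and> S \<subseteq> compl_elems L \<and> y \<sqsubseteq> Join L S}"
    and "t \<in> {Join L (\<mu> ` S) | S. finite S \<and> S \<subseteq> compl_elems L \<and> x \<sqsubseteq> Join L S}"
  then obtain Sx Sy
    where Sx: "finite Sx" "Sx \<subseteq> compl_elems L" "x \<sqsubseteq> Join L Sx" "t = Join L (\<mu> ` Sx)"
      and Sy: "finite Sy" "Sy \<subseteq> compl_elems L" "y \<sqsubseteq> Join L Sy" "s = Join L (\<mu> ` Sy)"
    by blast
  have E: "Sx \<subseteq> E" "Sy \<subseteq> E"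
    using Sx Sy compl_elems_subset by auto
  have "x \<sqsubseteq> Join L (Sx \<union> Sy)" "y \<sqsubseteq> Join L (Sy \<union> Sx)"
    using Sx Sy E x y Join_mono[of Sx "Sx \<union> Sy"] Join_mono[of Sy "Sy \<union> Sx"]
    by (meson Join_in Un_upper1 le_sup_iff leq_trans)+
  then have "Join L {x, y} \<sqsubseteq> Join L (Sx \<union> Sy)"
    using x y E by (simp add: Join_le_iff Un_commute)
  then have "generated_adh L \<mu> (Join L {x, y}) \<sqsubseteq> Join L (\<mu> ` (Sx \<union> Sy))"
    using Sx Sy by (intro generated_adh_le_cover) auto
  also have "Join L (\<mu> ` (Sx \<union> Sy)) = Join L {s, t}"
    using Join_Un[OF image_\<mu>_subset image_\<mu>_subset, OF Sy(2) Sx(2)] Sx Sy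
    by (simp add: image_Un Un_commute insert_commute)
  finally show "generated_adh L \<mu> (Join L {x, y}) \<sqsubseteq> Join L {s, t}" .
qed

lemma generated_adh_Join_le:
  "finite S \<Longrightarrow> S \<subseteq> E \<Longrightarrow> generated_adh L \<mu> (Join L S) \<sqsubseteq> Join L (generated_adh L \<mu> ` S)"
proof (induction S rule: finite_induct)
  case empty
  have "generated_adh L \<mu> (Join L {}) \<sqsubseteq> Join L (\<mu> ` {})"
    by (rule generated_adh_le_cover) (auto intro: leq_refl)
  then show ?case
    by simp
next
  case (insert x F)
  then have x: "x \<in> E" and F: "F \<subseteq> E"
    by auto
  have NF: "generated_adh L \<mu> ` F \<subseteq> E"
    using generated_adh_in by blast
  have "Join L (insert x F) = Join L {x, Join L F}"
    using x F by (rule Join_insert)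
  then have Join2: "generated_adh L \<mu> (Join L (insert x F))
      \<sqsubseteq> Join L {generated_adh L \<mu> x, generated_adh L \<mu> (Join L F)}"
    using x F by (simp add: generated_adh_Join2_le)
  have IH: "Join L {generated_adh L \<mu> x, generated_adh L \<mu> (Join L F)}
      \<sqsubseteq> Join L {generated_adh L \<mu> x, Join L (generated_adh L \<mu> ` F)}"
    using insert.IH F NF generated_adh_in by (intro Join2_mono) (auto intro: leq_refl)
  have "Join L (generated_adh L \<mu> ` insert x F)
      = Join L {generated_adh L \<mu> x, Join L (generated_adh L \<mu> ` F)}"
    using NF generated_adh_in by (simp only: image_insert Join_insert)
  then show ?case
    using leq_trans[OF _ _ _ Join2 IH] x F NF generated_adh_in by simp
qed

lemma generated_adh_Join:
  assumes "finite S" "S \<subseteq> E"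
  shows "generated_adh L \<mu> (Join L S) = Join L (generated_adh L \<mu> ` S)"
proof -
  have NS: "generated_adh L \<mu> ` S \<subseteq> E"
    using generated_adh_in by blast
  have "Join L (generated_adh L \<mu> ` S) \<sqsubseteq> generated_adh L \<mu> (Join L S)"
    using assms NS by (subst Join_le_iff) (auto intro!: generated_adh_mono Join_upper generated_adh_in)
  with assms NS show ?thesis
    by (intro leq_antisym generated_adh_Join_le) (auto intro: generated_adh_in)
qed

lemma generated_adh_eq_Meet:
  assumes l: "l \<in> E"
  shows "generated_adh L \<mu> l = Meet L (generated_adh L \<mu> ` {a \<in> compl_elems L. l \<sqsubseteq> a})"
    (is "_ = Meet L (_ ` ?D)")
proof (rule leq_antisym)
  have D: "generated_adh L \<mu> ` ?D \<subseteq> E"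
    using generated_adh_in by blast
  show "generated_adh L \<mu> l \<sqsubseteq> Meet L (generated_adh L \<mu> ` ?D)"
    using D l compl_elems_subset generated_adh_in
    by (subst le_Meet_iff) (auto intro!: generated_adh_mono)
  have "Meet L (generated_adh L \<mu> ` ?D) \<sqsubseteq> Join L (\<mu> ` S)"
    if S: "finite S" "S \<subseteq> compl_elems L" "l \<sqsubseteq> Join L S" for S
  proof -
    have "Join L S \<in> ?D"
      using S by (simp add: Join_compl)
    then have "Meet L (generated_adh L \<mu> ` ?D) \<sqsubseteq> generated_adh L \<mu> (Join L S)"
      using D by (intro Meet_lower) auto
    moreover have "generated_adh L \<mu> (Join L S) \<sqsubseteq> Join L (\<mu> ` S)"
      using S compl_elems_subset by (intro generated_adh_le_cover) (auto intro: leq_refl)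
    ultimately show ?thesis
      using D S image_\<mu>_subset generated_adh_in by (meson Join_in Meet_in leq_trans)
  qed
  then show "Meet L (generated_adh L \<mu> ` ?D) \<sqsubseteq> generated_adh L \<mu> l"
    using D by (simp add: le_generated_adh_iff)
qed (auto intro!: Meet_in image_subsetI generated_adh_in)

lemma adherence_generated_adh: "adherence L (generated_adh L \<mu>)"
  unfolding adherence_def
proof (intro conjI ballI allI impI)
  show "generated_adh L \<mu> ` E \<subseteq> E"
    using generated_adh_in by blast
  show "generated_adh L \<mu> x \<sqsubseteq> generated_adh L \<mu> y" if "x \<in> E" "y \<in> E" "x \<sqsubseteq> y" for x y
    using that by (rule generated_adh_mono)
  show "generated_adh L \<mu> (Join L S) = Join L (generated_adh L \<mu> ` S)"
    if "S \<subseteq> compl_elems L" "finite S" for S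
    using that compl_elems_subset by (intro generated_adh_Join) auto
  show "generated_adh L \<mu> l = Meet L (generated_adh L \<mu> ` {a \<in> compl_elems L. l \<sqsubseteq> a})"
    if "l \<in> E" for l
    using that by (rule generated_adh_eq_Meet)
qed

end

end

locale coframe_morphism =
  fixes L L' :: "'a lat" and f :: "'a \<Rightarrow> 'a"
  assumes coframe_hom: "coframe_hom L L' f"
begin

sublocale dom: coframe_lat L
  using coframe_hom by unfold_locales (simp add: coframe_hom_def)

sublocale cod: coframe_lat L'
  using coframe_hom by unfold_locales (simp add: coframe_hom_def)

lemma in_codomain: "x \<in> elems L \<Longrightarrow> f x \<in> elems L'"
  using coframe_hom unfolding coframe_hom_def by blast

lemma preserves_Meet: "S \<subseteq> elems L \<Longrightarrow> f (Meet L S) = Meet L' (f ` S)"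
  using coframe_hom unfolding coframe_hom_def by (elim conjE) simp

lemma preserves_Join: "S \<subseteq> elems L \<Longrightarrow> finite S \<Longrightarrow> f (Join L S) = Join L' (f ` S)"
  using coframe_hom unfolding coframe_hom_def by (elim conjE) simp

lemma mono_leq:
  assumes "x \<in> elems L" "y \<in> elems L" "leq L x y"
  shows "leq L' (f x) (f y)"
proof -
  have "f x = Meet L' {f x, f y}"
    using assms preserves_Meet[of "{x, y}"] by (simp add: dom.Meet_absorb)
  then show ?thesis
    using assms in_codomain by (metis cod.Meet_lower empty_subsetI insertCI insert_subset)
qed

lemma preserves_compl:
  assumes "a \<in> compl_elems L"
  shows "f a \<in> compl_elems L'"
proof -
  obtain b where "complement L a b"
    using assms by (auto simp: compl_elems_iff)
  then have "complement L' (f a) (f b)"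
    unfolding complement_def
    using preserves_Meet[of "{a, b}"] preserves_Join[of "{a, b}"]
      preserves_Meet[of "{}"] preserves_Join[of "{}"] in_codomain
    by auto
  then show ?thesis
    by (auto simp: compl_elems_iff)
qed

lemma ladj_in: "ladj L L' f y \<in> elems L"
  unfolding ladj_def by (intro dom.Meet_in) blast

lemma le_ladj: "y \<in> elems L' \<Longrightarrow> leq L' y (f (ladj L L' f y))"
  unfolding ladj_def using in_codomain
  by (subst preserves_Meet) (auto simp: cod.le_Meet_iff image_subset_iff)

lemma ladj_le: "x \<in> elems L \<Longrightarrow> leq L (ladj L L' f (f x)) x"
  unfolding ladj_def using in_codomain by (intro dom.Meet_lower) (auto intro: cod.leq_refl)

lemma continuous_adh_iff:
  assumes \<nu>: "adherence L \<nu>" and \<nu>': "adherence L' \<nu>'"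
  shows "continuous_adh L \<nu> L' \<nu>' f \<longleftrightarrow> (\<forall>x\<in>elems L. leq L' (\<nu>' (f x)) (f (\<nu> x)))"
proof
  assume cont: "continuous_adh L \<nu> L' \<nu>' f"
  show "\<forall>x\<in>elems L. leq L' (\<nu>' (f x)) (f (\<nu> x))"
  proof
    fix x assume x: "x \<in> elems L"
    have "leq L' (\<nu>' (f x)) (f (\<nu> (ladj L L' f (f x))))"
      using cont x in_codomain unfolding continuous_adh_def by blast
    moreover have "leq L' (f (\<nu> (ladj L L' f (f x)))) (f (\<nu> x))"
      using x ladj_in ladj_le adherence_in[OF \<nu>] adherence_mono[OF \<nu>] by (intro mono_leq) auto
    ultimately show "leq L' (\<nu>' (f x)) (f (\<nu> x))"
      using x ladj_in in_codomain adherence_in[OF \<nu>] adherence_in[OF \<nu>'] cod.leq_trans by metis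
  qed
next
  assume le: "\<forall>x\<in>elems L. leq L' (\<nu>' (f x)) (f (\<nu> x))"
  show "continuous_adh L \<nu> L' \<nu>' f"
    unfolding continuous_adh_def
  proof
    fix y assume y: "y \<in> elems L'"
    have "leq L' (\<nu>' y) (\<nu>' (f (ladj L L' f y)))"
      using y ladj_in in_codomain le_ladj by (intro adherence_mono[OF \<nu>']) auto
    then show "leq L' (\<nu>' y) (f (\<nu> (ladj L L' f y)))"
      using y le ladj_in in_codomain adherence_in[OF \<nu>] adherence_in[OF \<nu>'] cod.leq_trans by metis
  qed
qed

lemma continuous_adh_iff_compl:
  assumes \<nu>: "adherence L \<nu>" and \<nu>': "adherence L' \<nu>'"
  shows "continuous_adh L \<nu> L' \<nu>' f \<longleftrightarrow> (\<forall>a\<in>compl_elems L. leq L' (\<nu>' (f a)) (f (\<nu> a)))"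
proof -
  have "leq L' (\<nu>' (f x)) (f (\<nu> x))"
    if x: "x \<in> elems L" and le: "\<forall>a\<in>compl_elems L. leq L' (\<nu>' (f a)) (f (\<nu> a))" for x
  proof -
    let ?D = "{a \<in> compl_elems L. leq L x a}"
    have D: "?D \<subseteq> elems L" "\<nu> ` ?D \<subseteq> elems L"
      using dom.compl_elems_subset adherence_in[OF \<nu>] by auto
    have "leq L' (\<nu>' (f x)) (f (\<nu> a))" if a: "a \<in> ?D" for a
    proof -
      have a_in: "a \<in> elems L"
        using a D by blast
      have "leq L' (\<nu>' (f x)) (\<nu>' (f a))"
        using a a_in x in_codomain by (intro adherence_mono[OF \<nu>'] mono_leq) auto
      moreover have "leq L' (\<nu>' (f a)) (f (\<nu> a))"
        using le a by blast
      ultimately show ?thesis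
        using cod.leq_trans[of "\<nu>' (f x)" "\<nu>' (f a)" "f (\<nu> a)"] x a_in
        by (simp add: in_codomain adherence_in[OF \<nu>] adherence_in[OF \<nu>'])
    qed
    moreover have "f (\<nu> x) = Meet L' (f ` \<nu> ` ?D)"
      using adherence_eq_Meet[OF \<nu> x] D by (simp add: preserves_Meet)
    moreover have "f ` \<nu> ` ?D \<subseteq> elems L'"
      using D in_codomain by blast
    ultimately show ?thesis
      using x by (simp add: cod.le_Meet_iff in_codomain adherence_in[OF \<nu>'])
  qed
  then show ?thesis
    using continuous_adh_iff[OF \<nu> \<nu>'] dom.compl_elems_subset by blast
qed

context
  fixes \<mu> \<nu>' :: "'a \<Rightarrow> 'a"
  assumes \<mu>: "\<And>a. a \<in> compl_elems L \<Longrightarrow> \<mu> a \<in> elems L" and \<nu>': "adherence L' \<nu>'"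
begin

lemma adherence_image_Join_le:
  assumes le: "\<And>a. a \<in> compl_elems L \<Longrightarrow> leq L' (\<nu>' (f a)) (f (\<mu> a))"
    and S: "finite S" "S \<subseteq> compl_elems L"
  shows "leq L' (\<nu>' (f (Join L S))) (f (Join L (\<mu> ` S)))"
proof -
  have SE: "S \<subseteq> elems L" "\<mu> ` S \<subseteq> elems L" "f ` S \<subseteq> compl_elems L'"
    using S dom.compl_elems_subset \<mu> preserves_compl by auto
  have "\<nu>' (f (Join L S)) = Join L' ((\<lambda>x. \<nu>' (f x)) ` S)"
    using S SE by (simp add: preserves_Join adherence_Join[OF \<nu>'] image_image)
  also have "leq L' \<dots> (Join L' ((\<lambda>x. f (\<mu> x)) ` S))"
  proof (rule cod.Join_image_mono)
    show "(\<lambda>x. \<nu>' (f x)) ` S \<subseteq> elems L'" "(\<lambda>x. f (\<mu> x)) ` S \<subseteq> elems L'"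
      using SE in_codomain adherence_in[OF \<nu>'] by auto
    show "s \<in> S \<Longrightarrow> leq L' (\<nu>' (f s)) (f (\<mu> s))" for s
      using le S by blast
  qed
  also have "Join L' ((\<lambda>x. f (\<mu> x)) ` S) = f (Join L (\<mu> ` S))"
    using S SE by (simp add: preserves_Join image_image)
  finally show ?thesis .
qed

lemma adherence_image_le_generated_adh:
  assumes le: "\<And>a. a \<in> compl_elems L \<Longrightarrow> leq L' (\<nu>' (f a)) (f (\<mu> a))"
    and l: "l \<in> elems L"
  shows "leq L' (\<nu>' (f l)) (f (generated_adh L \<mu> l))"
proof -
  let ?X = "{Join L (\<mu> ` S) | S. finite S \<and> S \<subseteq> compl_elems L \<and> leq L l (Join L S)}"
  have X: "?X \<subseteq> elems L" "f ` ?X \<subseteq> elems L'"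
    using dom.cover_Joins_subset[of \<mu>, OF \<mu>] in_codomain by blast+
  have fl: "\<nu>' (f l) \<in> elems L'"
    using l in_codomain adherence_in[OF \<nu>'] by blast
  have "leq L' (\<nu>' (f l)) (f (Join L (\<mu> ` S)))"
    if S: "finite S" "S \<subseteq> compl_elems L" "leq L l (Join L S)" for S
  proof -
    have SE: "S \<subseteq> elems L" "\<mu> ` S \<subseteq> elems L"
      using S dom.compl_elems_subset \<mu> by auto
    have "leq L' (\<nu>' (f l)) (\<nu>' (f (Join L S)))"
      using S SE l in_codomain by (intro adherence_mono[OF \<nu>'] mono_leq) auto
    moreover have "leq L' (\<nu>' (f (Join L S))) (f (Join L (\<mu> ` S)))"
      using le S(1,2) by (rule adherence_image_Join_le)
    ultimately show ?thesis
      using SE fl in_codomain adherence_in[OF \<nu>'] by (meson cod.leq_trans dom.Join_in)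
  qed
  then show ?thesis
    unfolding generated_adh_def using X fl by (auto simp: preserves_Meet cod.le_Meet_iff)
qed

lemma continuous_generated_adh_iff:
  "continuous_adh L (generated_adh L \<mu>) L' \<nu>' f
    \<longleftrightarrow> (\<forall>a\<in>compl_elems L. leq L' (\<nu>' (f a)) (f (\<mu> a)))"
proof -
  have "leq L' (\<nu>' (f a)) (f (\<mu> a))"
    if le: "leq L' (\<nu>' (f a)) (f (generated_adh L \<mu> a))" and a: "a \<in> compl_elems L" for a
  proof -
    have "leq L' (f (generated_adh L \<mu> a)) (f (\<mu> a))"
      using a \<mu> dom.generated_adh_le[of \<mu>, OF \<mu> a] dom.generated_adh_in[of \<mu>, OF \<mu>]
      by (intro mono_leq) auto
    then show ?thesis
      using le a \<mu> dom.compl_elems_subset in_codomain adherence_in[OF \<nu>']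
        dom.generated_adh_in[of \<mu>, OF \<mu>]
      by (meson cod.leq_trans subsetD)
  qed
  moreover have "leq L' (\<nu>' (f a)) (f (generated_adh L \<mu> a))"
    if "\<forall>a\<in>compl_elems L. leq L' (\<nu>' (f a)) (f (\<mu> a))" and "a \<in> compl_elems L" for a
    using that dom.compl_elems_subset by (intro adherence_image_le_generated_adh) auto
  ultimately show ?thesis
    using continuous_adh_iff_compl[OF dom.adherence_generated_adh[of \<mu>, OF \<mu>] \<nu>'] by blast
qed

end

end

lemma coframe_hom_comp:
  assumes "coframe_hom L M f" "coframe_hom M N g"
  shows "coframe_hom L N (g \<circ> f)"
proof -
  interpret F: coframe_morphism L M f by (rule coframe_morphism.intro) fact
  interpret G: coframe_morphism M N g by (rule coframe_morphism.intro) fact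
  have "f ` S \<subseteq> elems M" if "S \<subseteq> elems L" for S
    using that F.in_codomain by blast
  then show ?thesis
    unfolding coframe_hom_def
    using F.dom.coframe G.cod.coframe F.in_codomain G.in_codomain
    by (auto simp: image_image F.preserves_Meet F.preserves_Join
        G.preserves_Meet G.preserves_Join)
qed

lemma continuous_adh_comp_le:
  assumes f: "coframe_hom M L f" and g: "coframe_hom L L' g"
    and \<nu>: "adherence M \<nu>" and \<nu>': "adherence L' \<nu>'"
    and cont: "continuous_adh M \<nu> L' \<nu>' (g \<circ> f)" and a: "a \<in> elems L"
  shows "leq L' (\<nu>' (g a)) (g (f (\<nu> (ladj M L f a))))"
proof -
  interpret F: coframe_morphism M L f by (rule coframe_morphism.intro) fact
  interpret G: coframe_morphism L L' g by (rule coframe_morphism.intro) fact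
  interpret GF: coframe_morphism M L' "g \<circ> f"
    by (rule coframe_morphism.intro) (rule coframe_hom_comp[OF f g])
  have "leq L' (\<nu>' (g a)) (\<nu>' (g (f (ladj M L f a))))"
    using a F.ladj_in F.le_ladj F.in_codomain G.in_codomain
    by (intro adherence_mono[OF \<nu>'] G.mono_leq) auto
  moreover have "leq L' (\<nu>' (g (f (ladj M L f a)))) (g (f (\<nu> (ladj M L f a))))"
    using cont GF.continuous_adh_iff[OF \<nu> \<nu>'] F.ladj_in by simp
  ultimately show ?thesis
    using a F.ladj_in F.in_codomain G.in_codomain adherence_in[OF \<nu>] adherence_in[OF \<nu>']
      G.cod.leq_trans by metis
qed

lemma continuous_adh_comp_iff:
  assumes f: "coframe_hom M L f" and g: "coframe_hom L L' g"
    and \<nu>: "adherence M \<nu>" and \<nu>': "adherence L' \<nu>'"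
  shows "continuous_adh M \<nu> L' \<nu>' (g \<circ> f)
    \<longleftrightarrow> (\<forall>a\<in>compl_elems L. leq L' (\<nu>' (g a)) (g (f (\<nu> (ladj M L f a)))))"
proof -
  interpret F: coframe_morphism M L f by (rule coframe_morphism.intro) fact
  interpret G: coframe_morphism L L' g by (rule coframe_morphism.intro) fact
  interpret GF: coframe_morphism M L' "g \<circ> f"
    by (rule coframe_morphism.intro) (rule coframe_hom_comp[OF f g])
  have "continuous_adh M \<nu> L' \<nu>' (g \<circ> f)"
    if le: "\<forall>a\<in>compl_elems L. leq L' (\<nu>' (g a)) (g (f (\<nu> (ladj M L f a))))"
  proof -
    have "leq L' (\<nu>' (g (f m))) (g (f (\<nu> m)))" if m: "m \<in> compl_elems M" for m
    proof -
      have m_in: "m \<in> elems M"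
        using m F.dom.compl_elems_subset by blast
      have "leq L' (g (f (\<nu> (ladj M L f (f m))))) (g (f (\<nu> m)))"
        using m_in F.ladj_in F.ladj_le adherence_in[OF \<nu>] adherence_mono[OF \<nu>] F.in_codomain
        by (intro G.mono_leq F.mono_leq) auto
      then show ?thesis
        using le F.preserves_compl[OF m] m_in F.ladj_in G.in_codomain F.in_codomain
          adherence_in[OF \<nu>] adherence_in[OF \<nu>'] G.cod.leq_trans by metis
    qed
    then show ?thesis
      using GF.continuous_adh_iff_compl[OF \<nu> \<nu>'] by simp
  qed
  then show ?thesis
    using continuous_adh_comp_le[OF f g \<nu> \<nu>'] F.cod.compl_elems_subset by blast
qed

locale coframe_sink = coframe_lat L for L :: "'a lat" +
  fixes I :: "'i set" and Ls :: "'i \<Rightarrow> 'a lat" and \<nu>s :: "'i \<Rightarrow> 'a \<Rightarrow> 'a"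
    and \<phi> :: "'i \<Rightarrow> 'a \<Rightarrow> 'a"
  assumes adherence_source: "i \<in> I \<Longrightarrow> adherence (Ls i) (\<nu>s i)"
    and coframe_hom_sink: "i \<in> I \<Longrightarrow> coframe_hom (Ls i) L (\<phi> i)"
begin

abbreviation sink_bound :: "'a \<Rightarrow> 'a" where
  "sink_bound a \<equiv> Meet L ((\<lambda>i. \<phi> i (\<nu>s i (ladj (Ls i) L (\<phi> i) a))) ` I)"

lemma sink_term_in:
  assumes i: "i \<in> I"
  shows "\<phi> i (\<nu>s i (ladj (Ls i) L (\<phi> i) a)) \<in> E"
proof -
  interpret \<Phi>: coframe_morphism "Ls i" L "\<phi> i"
    using coframe_hom_sink[OF i] by (rule coframe_morphism.intro)
  show ?thesis
    using \<Phi>.in_codomain adherence_in[OF adherence_source[OF i] \<Phi>.ladj_in] .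
qed

lemma sink_bound_in: "sink_bound a \<in> E"
  using sink_term_in by (intro Meet_in) blast

lemma sink_adh_eq_generated_adh: "sink_adh I Ls \<nu>s \<phi> L = generated_adh L sink_bound"
  by (simp add: fun_eq_iff sink_adh_def generated_adh_def)

lemma adherence_sink_adh: "adherence L (sink_adh I Ls \<nu>s \<phi> L)"
  unfolding sink_adh_eq_generated_adh using sink_bound_in by (rule adherence_generated_adh)

lemma continuous_sink_adh_iff:
  assumes \<psi>: "coframe_hom L L' \<psi>" and \<nu>': "adherence L' \<nu>'"
  shows "continuous_adh L (sink_adh I Ls \<nu>s \<phi> L) L' \<nu>' \<psi>
    \<longleftrightarrow> (\<forall>i\<in>I. continuous_adh (Ls i) (\<nu>s i) L' \<nu>' (\<psi> \<circ> \<phi> i))"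
proof -
  interpret \<Psi>: coframe_morphism L L' \<psi> by (rule coframe_morphism.intro) fact
  have "continuous_adh L (sink_adh I Ls \<nu>s \<phi> L) L' \<nu>' \<psi>
      \<longleftrightarrow> (\<forall>a\<in>compl_elems L. leq L' (\<nu>' (\<psi> a)) (\<psi> (sink_bound a)))"
    unfolding sink_adh_eq_generated_adh
    by (rule \<Psi>.continuous_generated_adh_iff[of sink_bound, OF sink_bound_in \<nu>'])
  also have "\<dots> \<longleftrightarrow> (\<forall>a\<in>compl_elems L. \<forall>i\<in>I.
      leq L' (\<nu>' (\<psi> a)) (\<psi> (\<phi> i (\<nu>s i (ladj (Ls i) L (\<phi> i) a)))))"
  proof (intro ball_cong refl)
    fix a assume "a \<in> compl_elems L"
    then have "\<nu>' (\<psi> a) \<in> elems L'"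
      using compl_elems_subset \<Psi>.in_codomain adherence_in[OF \<nu>'] by blast
    moreover have "(\<lambda>i. \<phi> i (\<nu>s i (ladj (Ls i) L (\<phi> i) a))) ` I \<subseteq> E"
      using sink_term_in by blast
    ultimately show "leq L' (\<nu>' (\<psi> a)) (\<psi> (sink_bound a))
        \<longleftrightarrow> (\<forall>i\<in>I. leq L' (\<nu>' (\<psi> a)) (\<psi> (\<phi> i (\<nu>s i (ladj (Ls i) L (\<phi> i) a)))))"
      using \<Psi>.in_codomain by (simp add: \<Psi>.preserves_Meet \<Psi>.cod.le_Meet_iff image_subset_iff)
  qed
  also have "\<dots> \<longleftrightarrow> (\<forall>i\<in>I. continuous_adh (Ls i) (\<nu>s i) L' \<nu>' (\<psi> \<circ> \<phi> i))"
    using continuous_adh_comp_iff[OF coframe_hom_sink \<psi> adherence_source \<nu>'] by auto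
  finally show ?thesis .
qed

lemma continuous_sink_adh:
  assumes "i \<in> I"
  shows "continuous_adh (Ls i) (\<nu>s i) L (sink_adh I Ls \<nu>s \<phi> L) (\<phi> i)"
proof -
  interpret Id: coframe_morphism L L id
    using coframe_hom_id by (rule coframe_morphism.intro)
  have "continuous_adh L (sink_adh I Ls \<nu>s \<phi> L) L (sink_adh I Ls \<nu>s \<phi> L) id"
    using adherence_sink_adh adherence_in[OF adherence_sink_adh]
    by (simp add: Id.continuous_adh_iff leq_refl)
  then show ?thesis
    using assms continuous_sink_adh_iff[OF coframe_hom_id adherence_sink_adh] by simp
qed

lemma is_final_lift_sink_adh:
  assumes "coframe_category Ob Hom"
  shows "is_final_lift Ob Hom I Ls \<nu>s \<phi> L (sink_adh I Ls \<nu>s \<phi> L)"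
  using assms adherence_sink_adh continuous_sink_adh continuous_sink_adh_iff
  unfolding is_final_lift_def is_lift_def coframe_category_def by blast

end

lemma lift_le_final_lift:
  assumes "coframe_category Ob Hom" "L \<in> Ob"
    and "is_final_lift Ob Hom I Ls \<nu>s \<phi> L \<nu>" "is_lift I Ls \<nu>s \<phi> L \<nu>'"
    and "l \<in> elems L"
  shows "leq L (\<nu>' l) (\<nu> l)"
proof -
  have "Hom L L id" "coframe L"
    using assms(1,2) unfolding coframe_category_def by blast+
  then interpret Id: coframe_morphism L L id
    by (intro coframe_morphism.intro coframe_lat.coframe_hom_id coframe_lat.intro)
  have "continuous_adh L \<nu> L \<nu>' id"
    using assms(2-4) \<open>Hom L L id\<close> unfolding is_final_lift_def is_lift_def by simp
  then show ?thesis
    using assms(3-5) Id.continuous_adh_iff unfolding is_final_lift_def is_lift_def by simp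
qed

lemma final_lifts_agree:
  assumes "coframe_category Ob Hom" "L \<in> Ob"
    and "is_final_lift Ob Hom I Ls \<nu>s \<phi> L \<nu>\<^sub>1" "is_final_lift Ob Hom I Ls \<nu>s \<phi> L \<nu>\<^sub>2"
    and "l \<in> elems L"
  shows "\<nu>\<^sub>1 l = \<nu>\<^sub>2 l"
proof -
  interpret coframe_lat L
    using assms(1,2) unfolding coframe_category_def by (intro coframe_lat.intro) blast
  have lifts: "is_lift I Ls \<nu>s \<phi> L \<nu>\<^sub>1" "is_lift I Ls \<nu>s \<phi> L \<nu>\<^sub>2"
    using assms(3,4) unfolding is_final_lift_def by blast+
  have "\<nu>\<^sub>1 l \<in> E" "\<nu>\<^sub>2 l \<in> E"
    using lifts assms(5) by (simp_all add: is_lift_def adherence_in)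
  moreover have "leq L (\<nu>\<^sub>1 l) (\<nu>\<^sub>2 l)"
    using lift_le_final_lift[OF assms(1,2,4) lifts(1) assms(5)] .
  moreover have "leq L (\<nu>\<^sub>2 l) (\<nu>\<^sub>1 l)"
    using lift_le_final_lift[OF assms(1,2,3) lifts(2) assms(5)] .
  ultimately show ?thesis
    by (rule leq_antisym)
qed

theorem mainTheorem12:
  fixes Ob :: "'a lat set" and Hom :: "'a lat \<Rightarrow> 'a lat \<Rightarrow> ('a \<Rightarrow> 'a) \<Rightarrow> bool"
    and I :: "'i set" and Ls :: "'i \<Rightarrow> 'a lat" and \<nu>s :: "'i \<Rightarrow> 'a \<Rightarrow> 'a"
    and \<phi> :: "'i \<Rightarrow> 'a \<Rightarrow> 'a" and L :: "'a lat"
  assumes "coframe_category Ob Hom"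
    and "L \<in> Ob"
    and "\<forall>i\<in>I. Ls i \<in> Ob \<and> adherence (Ls i) (\<nu>s i) \<and> Hom (Ls i) L (\<phi> i)"
  shows "is_final_lift Ob Hom I Ls \<nu>s \<phi> L (sink_adh I Ls \<nu>s \<phi> L)
    \<and> (\<forall>\<nu>. is_final_lift Ob Hom I Ls \<nu>s \<phi> L \<nu> \<longrightarrow>
           (\<forall>l\<in>elems L. \<nu> l = sink_adh I Ls \<nu>s \<phi> L l))"
proof -
  interpret coframe_sink L I Ls \<nu>s \<phi>
    using assms unfolding coframe_category_def by unfold_locales blast+
  have final: "is_final_lift Ob Hom I Ls \<nu>s \<phi> L (sink_adh I Ls \<nu>s \<phi> L)"
    using assms(1) by (rule is_final_lift_sink_adh)
  moreover have "\<nu> l = sink_adh I Ls \<nu>s \<phi> L l"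
    if "is_final_lift Ob Hom I Ls \<nu>s \<phi> L \<nu>" "l \<in> elems L" for \<nu> l
    using final_lifts_agree[OF assms(1,2) that(1) final that(2)] .
  ultimately show ?thesis by blast
qed

end
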